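(* In the setting of 1D Toom-Cook convolution described in the context, suppose every dot product in the three linear transforms (by $G$, $B^T$ and $A^T$) is computed by linear (recursive, left-to-right) summation of the rounded products, with arbitrary (not necessarily exactly representable) matrix entries. Then $$|\hat s-s|\le |A^T|\big(|G|\,|h|\odot|B^T|\,|x|\big)(n_h+2n+4)\varepsilon+O(\varepsilon^2)$$ and $$\|\hat s-s\|_1\le \|A^T\|_1\,\|G\|_F\,\|h\|_2\,\|B^T\|_F\,\|x\|_2\,(n_h+2n+4)\varepsilon+O(\varepsilon^2).$$
   Context: Let $n_h,n_o\ge1$, $n=n_o+n_h-1$, $p_1,\dots,p_n$ distinct reals, $N_i=1/\prod_{j\ne i}(p_i-p_j)$, $M_{i,j}$ the coefficient of $a^{j-1}$ in $\prod_{k\ne i}(a-p_k)$; $A^T\in\mathbb{R}^{n_o\times n}$ with $A^T_{i,j}=p_j^{i-1}$, $G\in\mathbb{R}^{n\times n_h}$ with $G_{i,j}=p_i^{j-1}N_i$, $B^T\in\mathbb{R}^{n\times n}$ with $B^T_{i,j}=M_{j,i}$. For $h\in F^{n_h}$, $x\in F^n$, $s=A^T(Gh\odot B^Tx)$ is the exact value and $\hat s$ is computed as: $u=fl(fl(G)h)$, $v=fl(fl(B^T)x)$ (row dot products), $w_i=fl(u_iv_i)$, $\hat s=fl(fl(A^T)w)$. Floating point model: unit roundoff $\varepsilon$, no overflow, $fl(y\,\mathrm{op}\,z)=(y\,\mathrm{op}\,z)(1+\delta)$, $fl(y)=y(1+\delta)$, $|\delta|\le\varepsilon$; matrix entries are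 stored rounded. $\odot$ is the Hadamard product, $|\cdot|$ entrywise absolute value, $\|\cdot\|_1$ the vector 1-norm / induced matrix 1-norm, $\|\cdot\|_F$ Frobenius norm, $\|\cdot\|_2$ Euclidean norm. *)

theory Defs
  imports Complex_Main "HOL-Computational_Algebra.Polynomial"
begin

text \<open>All indices are 0-based: vector/matrix index i corresponds to index i+1 of the paper.
  Matrices are functions nat => nat => real, vectors nat => real, with explicit dimensions.\<close>

definition tcN :: "nat \<Rightarrow> (nat \<Rightarrow> real) \<Rightarrow> nat \<Rightarrow> real" where
  "tcN n p i = 1 / (\<Prod>j\<in>{..<n} - {i}. (p i - p j))"

definition tcM :: "nat \<Rightarrow> (nat \<Rightarrow> real) \<Rightarrow> nat \<Rightarrow> nat \<Rightarrow> real" where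
  "tcM n p i j = coeff (\<Prod>k\<in>{..<n} - {i}. [:- p k, 1:]) j"

definition tcAT :: "(nat \<Rightarrow> real) \<Rightarrow> nat \<Rightarrow> nat \<Rightarrow> real" where
  "tcAT p i j = p j ^ i"

definition tcG :: "nat \<Rightarrow> (nat \<Rightarrow> real) \<Rightarrow> nat \<Rightarrow> nat \<Rightarrow> real" where
  "tcG n p i j = p i ^ j * tcN n p i"

definition tcBT :: "nat \<Rightarrow> (nat \<Rightarrow> real) \<Rightarrow> nat \<Rightarrow> nat \<Rightarrow> real" where
  "tcBT n p i j = tcM n p j i"

text \<open>Rounded linear (recursive, left-to-right) summation of terms t 0, ..., t (m-1):
  the k-th addition (k >= 1) is perturbed by the factor (1 + d k); the first term is taken as is.\<close>
fun lsum :: "(nat \<Rightarrow> real) \<Rightarrow> (nat \<Rightarrow> real) \<Rightarrow> nat \<Rightarrow> real" where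
  "lsum t d 0 = 0"
| "lsum t d (Suc k) = (if k = 0 then t 0 else (lsum t d k + t k) * (1 + d k))"

text \<open>r is a possible floating point value of the dot product of the row a (length m, entries
  stored rounded) with the vector y, computed by linear summation of rounded products.\<close>
definition fl_dot :: "real \<Rightarrow> nat \<Rightarrow> (nat \<Rightarrow> real) \<Rightarrow> (nat \<Rightarrow> real) \<Rightarrow> real \<Rightarrow> bool" where
  "fl_dot eps m a y r \<longleftrightarrow>
     (\<exists>da dm ds :: nat \<Rightarrow> real.
        (\<forall>j. \<bar>da j\<bar> \<le> eps) \<and> (\<forall>j. \<bar>dm j\<bar> \<le> eps) \<and> (\<forall>j. \<bar>ds j\<bar> \<le> eps) \<and>
        r = lsum (\<lambda>j. (a j * (1 + da j)) * y j * (1 + dm j)) ds m)"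

text \<open>shat is a possible computed result of the Toom-Cook algorithm
  u = fl(fl(G)h), v = fl(fl(B^T)x), w_i = fl(u_i v_i), shat = fl(fl(A^T)w).\<close>
definition tc_computed ::
  "real \<Rightarrow> nat \<Rightarrow> nat \<Rightarrow> (nat \<Rightarrow> real) \<Rightarrow> (nat \<Rightarrow> real) \<Rightarrow> (nat \<Rightarrow> real) \<Rightarrow> (nat \<Rightarrow> real) \<Rightarrow> bool" where
  "tc_computed eps n_o n_h p h x shat \<longleftrightarrow>
     (let n = n_o + n_h - 1 in
      \<exists>u v w :: nat \<Rightarrow> real.
        (\<forall>i<n. fl_dot eps n_h (tcG n p i) h (u i)) \<and>
        (\<forall>i<n. fl_dot eps n (tcBT n p i) x (v i)) \<and>
        (\<forall>i<n. \<exists>\<delta>. \<bar>\<delta>\<bar> \<le> eps \<and> w i = u i * v i * (1 + \<delta>)) \<and>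
        (\<forall>i<n_o. fl_dot eps n (tcAT p i) w (shat i)))"

definition tc_exact :: "nat \<Rightarrow> nat \<Rightarrow> (nat \<Rightarrow> real) \<Rightarrow> (nat \<Rightarrow> real) \<Rightarrow> (nat \<Rightarrow> real) \<Rightarrow> nat \<Rightarrow> real" where
  "tc_exact n_o n_h p h x i =
     (let n = n_o + n_h - 1 in
      \<Sum>j<n. tcAT p i j * ((\<Sum>k<n_h. tcG n p j k * h k) * (\<Sum>k<n. tcBT n p j k * x k)))"

definition mat_norm1 :: "nat \<Rightarrow> nat \<Rightarrow> (nat \<Rightarrow> nat \<Rightarrow> real) \<Rightarrow> real" where
  "mat_norm1 r c A = Max ((\<lambda>j. \<Sum>i<r. \<bar>A i j\<bar>) ` {..<c})"

definition frob :: "nat \<Rightarrow> nat \<Rightarrow> (nat \<Rightarrow> nat \<Rightarrow> real) \<Rightarrow> real" where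
  "frob r c A = sqrt (\<Sum>i<r. \<Sum>j<c. (A i j)^2)"

definition vnorm2 :: "nat \<Rightarrow> (nat \<Rightarrow> real) \<Rightarrow> real" where
  "vnorm2 m y = sqrt (\<Sum>k<m. (y k)^2)"

end

theory Submission
  imports Defs "HOL-Analysis.L2_Norm"
begin

text \<open>Every computed value is an exact expression whose terms carry products of rounding factors
  \<open>1 + \<delta>\<close>. Along the path of one term of the trilinear sum \<open>s\<^sub>i = \<Sum>\<^sub>j\<^sub>k\<^sub>l A\<^sub>i\<^sub>j G\<^sub>j\<^sub>k h\<^sub>k B\<^sub>j\<^sub>l x\<^sub>l\<close>
  at most \<open>n\<^sub>h + 1\<close> factors come from the dot product with \<open>G\<close>, \<open>n + 1\<close> from the one with \<open>B\<^sup>T\<close>,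
  one from the Hadamard product and \<open>n + 1\<close> from the one with \<open>A\<^sup>T\<close>; so each term has relative
  error at most \<open>(1 + \<epsilon>)\<^bsup>n\<^sub>h + 2n + 4\<^esup> - 1 = (n\<^sub>h + 2n + 4)\<epsilon> + O(\<epsilon>\<^sup>2)\<close>, and the triangle
  inequality gives the componentwise bound. The normwise bound follows from the column sums
  of \<open>|A\<^sup>T|\<close> and Cauchy-Schwarz. Neither bound uses the special form of the three matrices.\<close>

definition err_growth :: "nat \<Rightarrow> real \<Rightarrow> real" where
  "err_growth K e = (1 + e) ^ K - 1"

lemma err_growth_nonneg: "0 \<le> e \<Longrightarrow> 0 \<le> err_growth K e"
  unfolding err_growth_def by (simp add: one_le_power)

lemma err_growth_mono: "0 \<le> e \<Longrightarrow> K \<le> L \<Longrightarrow> err_growth K e \<le> err_growth L e"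
  unfolding err_growth_def by (simp add: power_increasing)

lemma err_growth_one: "\<bar>d\<bar> \<le> e \<Longrightarrow> \<bar>(1 + d) - 1\<bar> \<le> err_growth 1 e"
  unfolding err_growth_def by simp

lemma err_growth_mult:
  assumes "0 \<le> e" "\<bar>a - 1\<bar> \<le> err_growth K e" "\<bar>b - 1\<bar> \<le> err_growth L e"
  shows "\<bar>a * b - 1\<bar> \<le> err_growth (K + L) e"
proof -
  have "\<bar>a * b - 1\<bar> = \<bar>(a - 1) * (b - 1) + (a - 1) + (b - 1)\<bar>"
    by (simp add: algebra_simps)
  also have "\<dots> \<le> \<bar>(a - 1) * (b - 1) + (a - 1)\<bar> + \<bar>b - 1\<bar>"
    by (rule abs_triangle_ineq)
  also have "\<dots> \<le> \<bar>a - 1\<bar> * \<bar>b - 1\<bar> + \<bar>a - 1\<bar> + \<bar>b - 1\<bar>"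
    using abs_triangle_ineq [of "(a - 1) * (b - 1)" "a - 1"] by (simp add: abs_mult)
  also have "\<dots> \<le> err_growth K e * err_growth L e + err_growth K e + err_growth L e"
    using assms by (intro add_mono mult_mono) auto
  also have "\<dots> = err_growth (K + L) e"
    unfolding err_growth_def by (simp add: power_add algebra_simps)
  finally show ?thesis .
qed

lemma err_growth_prod:
  assumes "finite S" "0 \<le> e" "\<And>k. k \<in> S \<Longrightarrow> \<bar>d k\<bar> \<le> e"
  shows "\<bar>(\<Prod>k\<in>S. 1 + d k) - 1\<bar> \<le> err_growth (card S) e"
  using assms
proof (induction S rule: finite_induct)
  case empty
  then show ?case by (simp add: err_growth_def)
next
  case (insert a S)
  then have "\<bar>(1 + d a) * (\<Prod>k\<in>S. 1 + d k) - 1\<bar> \<le> err_growth (1 + card S) e"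
    by (intro err_growth_mult err_growth_one) auto
  with insert show ?case by simp
qed

lemma err_growth_le_linear:
  assumes "0 \<le> e" "e \<le> 1"
  shows "err_growth K e \<le> real K * e + 3 ^ K * e\<^sup>2"
proof (induction K)
  case 0
  then show ?case by (simp add: err_growth_def)
next
  case (Suc K)
  have "real K < 2 ^ K"
    using less_exp [of K] by (metis of_nat_less_iff of_nat_numeral of_nat_power)
  also have "(2::real) ^ K \<le> 3 ^ K"
    by (intro power_mono) auto
  finally have K_le: "real K \<le> 3 ^ K"
    by simp
  have "(1 + e) ^ Suc K \<le> (1 + real K * e + 3 ^ K * e\<^sup>2) * (1 + e)"
    using Suc assms by (simp add: err_growth_def mult_right_mono)
  also have "\<dots> = 1 + real (Suc K) * e + (real K * e\<^sup>2 + 3 ^ K * e\<^sup>2 + 3 ^ K * e\<^sup>2 * e)"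
    by (simp add: algebra_simps power2_eq_square)
  also have "\<dots> \<le> 1 + real (Suc K) * e + 3 ^ Suc K * e\<^sup>2"
  proof -
    have "3 ^ K * e\<^sup>2 * e \<le> 3 ^ K * e\<^sup>2"
      using assms by (intro mult_left_le) auto
    moreover have "real K * e\<^sup>2 \<le> 3 ^ K * e\<^sup>2"
      using K_le by (rule mult_right_mono) simp
    moreover have "3 ^ Suc K * e\<^sup>2 = 3 * (3 ^ K * e\<^sup>2)"
      by simp
    ultimately show ?thesis
      by linarith
  qed
  finally show ?case by (simp add: err_growth_def)
qed

lemma le_first_order_of_err_growth:
  assumes "0 \<le> e" "e \<le> 1" "0 \<le> T" "3 ^ K * T \<le> C" "d \<le> T * err_growth K e"
  shows "d \<le> T * real K * e + C * e\<^sup>2"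
proof -
  have "d \<le> T * (real K * e + 3 ^ K * e\<^sup>2)"
    using assms err_growth_le_linear[of e K] by (meson mult_left_mono order_trans)
  also have "\<dots> = T * real K * e + (3 ^ K * T) * e\<^sup>2"
    by (simp add: algebra_simps)
  also have "\<dots> \<le> T * real K * e + C * e\<^sup>2"
    using assms by (intro add_left_mono mult_right_mono) auto
  finally show ?thesis .
qed

lemma lsum_eq_sum_prod: "lsum t d m = (\<Sum>j<m. t j * (\<Prod>k\<in>{max j 1..<m}. 1 + d k))"
proof (induction m)
  case 0
  then show ?case by simp
next
  case (Suc m)
  show ?case
  proof (cases "m = 0")
    case True
    then show ?thesis by simp
  next
    case False
    then have "lsum t d (Suc m) = (\<Sum>j<m. t j * (\<Prod>k\<in>{max j 1..<m}. 1 + d k) * (1 + d m)) + t m * (1 + d m)"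
      by (simp add: Suc.IH distrib_right sum_distrib_right)
    also have "\<dots> = (\<Sum>j<Suc m. t j * (\<Prod>k\<in>{max j 1..<Suc m}. 1 + d k))"
      using False by (auto simp: max_def mult.assoc intro!: sum.cong)
    finally show ?thesis .
  qed
qed

text \<open>The bound \<open>m + 1\<close> counts the rounding of the entry, of the product and at most
  \<open>m - 1\<close> additions.\<close>
lemma fl_dot_backward_error:
  assumes "fl_dot e m a y r" "0 \<le> e"
  shows "\<exists>\<theta>. (\<forall>j<m. \<bar>\<theta> j - 1\<bar> \<le> err_growth (m + 1) e) \<and> r = (\<Sum>j<m. a j * y j * \<theta> j)"
proof -
  obtain da dm ds where d: "\<forall>j. \<bar>da j\<bar> \<le> e" "\<forall>j. \<bar>dm j\<bar> \<le> e" "\<forall>j. \<bar>ds j\<bar> \<le> e"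
    and r: "r = lsum (\<lambda>j. (a j * (1 + da j)) * y j * (1 + dm j)) ds m"
    using assms(1) unfolding fl_dot_def by blast
  define \<theta> where "\<theta> j = (1 + da j) * (1 + dm j) * (\<Prod>k\<in>{max j 1..<m}. 1 + ds k)" for j
  have "r = (\<Sum>j<m. a j * y j * \<theta> j)"
    unfolding r lsum_eq_sum_prod \<theta>_def by (simp add: algebra_simps)
  moreover have "\<bar>\<theta> j - 1\<bar> \<le> err_growth (m + 1) e" if "j < m" for j
  proof -
    have "\<bar>\<theta> j - 1\<bar> \<le> err_growth (1 + 1 + card {max j 1..<m}) e"
      unfolding \<theta>_def using d assms(2) by (intro err_growth_mult err_growth_one err_growth_prod) auto
    also have "\<dots> \<le> err_growth (m + 1) e"
      using that assms(2) by (intro err_growth_mono) auto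
    finally show ?thesis .
  qed
  ultimately show ?thesis by blast
qed

lemma fl_dot_rows_backward_error:
  assumes "\<forall>j<n. fl_dot e m (A j) y (r j)" "0 \<le> e"
  shows "\<exists>\<theta>. \<forall>j<n. (\<forall>k<m. \<bar>\<theta> j k - 1\<bar> \<le> err_growth (m + 1) e) \<and> r j = (\<Sum>k<m. A j k * y k * \<theta> j k)"
proof -
  have "\<forall>j<n. \<exists>\<theta>. (\<forall>k<m. \<bar>\<theta> k - 1\<bar> \<le> err_growth (m + 1) e) \<and> r j = (\<Sum>k<m. A j k * y k * \<theta> k)"
    using assms fl_dot_backward_error by blast
  then show ?thesis
    by (simp only: choice_iff')
qed

lemma sum_perturbation_abs_le:
  fixes f \<theta> :: "'a \<Rightarrow> real"
  assumes "\<And>i. i \<in> S \<Longrightarrow> \<bar>\<theta> i - 1\<bar> \<le> g"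
  shows "\<bar>(\<Sum>i\<in>S. f i * \<theta> i) - (\<Sum>i\<in>S. f i)\<bar> \<le> (\<Sum>i\<in>S. \<bar>f i\<bar>) * g"
proof -
  have "\<bar>(\<Sum>i\<in>S. f i * \<theta> i) - (\<Sum>i\<in>S. f i)\<bar> = \<bar>\<Sum>i\<in>S. f i * (\<theta> i - 1)\<bar>"
    by (simp add: right_diff_distrib sum_subtractf)
  also have "\<dots> \<le> (\<Sum>i\<in>S. \<bar>f i\<bar> * \<bar>\<theta> i - 1\<bar>)"
    unfolding abs_mult [symmetric] by (rule sum_abs)
  also have "\<dots> \<le> (\<Sum>i\<in>S. \<bar>f i\<bar> * g)"
    using assms by (intro sum_mono mult_left_mono) auto
  finally show ?thesis by (simp add: sum_distrib_right)
qed

lemma sum3_perturbation_abs_le: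
  fixes P \<Psi> :: "nat \<Rightarrow> nat \<Rightarrow> nat \<Rightarrow> real"
  assumes "\<And>j k l. j < n \<Longrightarrow> k < n' \<Longrightarrow> l < n'' \<Longrightarrow> \<bar>\<Psi> j k l - 1\<bar> \<le> g"
  shows "\<bar>(\<Sum>j<n. \<Sum>k<n'. \<Sum>l<n''. P j k l * \<Psi> j k l) - (\<Sum>j<n. \<Sum>k<n'. \<Sum>l<n''. P j k l)\<bar>
     \<le> (\<Sum>j<n. \<Sum>k<n'. \<Sum>l<n''. \<bar>P j k l\<bar>) * g"
  using sum_perturbation_abs_le[of "{..<n} \<times> {..<n'} \<times> {..<n''}" "\<lambda>(j,k,l). \<Psi> j k l" g "\<lambda>(j,k,l). P j k l"] assms
  by (force simp: sum.cartesian_product case_prod_beta)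

lemma fl_bilinear_error:
  fixes a h x u v w :: "nat \<Rightarrow> real" and G B :: "nat \<Rightarrow> nat \<Rightarrow> real"
  assumes e: "0 \<le> e"
    and u: "\<forall>j<n. fl_dot e n' (G j) h (u j)"
    and v: "\<forall>j<n. fl_dot e n'' (B j) x (v j)"
    and w: "\<forall>j<n. \<exists>\<delta>. \<bar>\<delta>\<bar> \<le> e \<and> w j = u j * v j * (1 + \<delta>)"
    and r: "fl_dot e n a w r"
  shows "\<bar>r - (\<Sum>j<n. a j * ((\<Sum>k<n'. G j k * h k) * (\<Sum>l<n''. B j l * x l)))\<bar>
     \<le> (\<Sum>j<n. \<bar>a j\<bar> * ((\<Sum>k<n'. \<bar>G j k\<bar> * \<bar>h k\<bar>) * (\<Sum>l<n''. \<bar>B j l\<bar> * \<bar>x l\<bar>)))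
        * err_growth (n' + n'' + n + 4) e"
proof -
  obtain \<alpha> where \<alpha>: "\<forall>j<n. (\<forall>k<n'. \<bar>\<alpha> j k - 1\<bar> \<le> err_growth (n' + 1) e)
      \<and> u j = (\<Sum>k<n'. G j k * h k * \<alpha> j k)"
    using fl_dot_rows_backward_error[OF u e] by blast
  obtain \<beta> where \<beta>: "\<forall>j<n. (\<forall>l<n''. \<bar>\<beta> j l - 1\<bar> \<le> err_growth (n'' + 1) e)
      \<and> v j = (\<Sum>l<n''. B j l * x l * \<beta> j l)"
    using fl_dot_rows_backward_error[OF v e] by blast
  obtain \<delta> where \<delta>: "\<forall>j<n. \<bar>\<delta> j\<bar> \<le> e \<and> w j = u j * v j * (1 + \<delta> j)"
    using w unfolding choice_iff' by blast
  obtain \<gamma> where \<gamma>: "\<forall>j<n. \<bar>\<gamma> j - 1\<bar> \<le> err_growth (n + 1) e" and r: "r = (\<Sum>j<n. a j * w j * \<gamma> j)"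
    using fl_dot_backward_error[OF r e] by blast
  define P where "P j k l = a j * G j k * h k * B j l * x l" for j k l
  define \<Psi> where "\<Psi> j k l = \<alpha> j k * \<beta> j l * (1 + \<delta> j) * \<gamma> j" for j k l
  have r_expand: "r = (\<Sum>j<n. \<Sum>k<n'. \<Sum>l<n''. P j k l * \<Psi> j k l)"
    unfolding r
  proof (intro sum.cong refl)
    fix j assume "j \<in> {..<n}"
    then have "a j * w j * \<gamma> j
        = a j * ((\<Sum>k<n'. G j k * h k * \<alpha> j k) * (\<Sum>l<n''. B j l * x l * \<beta> j l) * (1 + \<delta> j)) * \<gamma> j"
      using \<alpha> \<beta> \<delta> by simp
    also have "\<dots> = (\<Sum>k<n'. \<Sum>l<n''. P j k l * \<Psi> j k l)"
      unfolding sum_product P_def \<Psi>_def by (simp add: sum_distrib_left sum_distrib_right mult_ac)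
    finally show "a j * w j * \<gamma> j = (\<Sum>k<n'. \<Sum>l<n''. P j k l * \<Psi> j k l)" .
  qed
  have \<Psi>_bound: "\<bar>\<Psi> j k l - 1\<bar> \<le> err_growth (n' + n'' + n + 4) e"
    if "j < n" "k < n'" "l < n''" for j k l
  proof -
    have "\<bar>\<Psi> j k l - 1\<bar> \<le> err_growth ((n' + 1) + (n'' + 1) + 1 + (n + 1)) e"
      unfolding \<Psi>_def using that \<alpha> \<beta> \<gamma> \<delta> e by (intro err_growth_mult err_growth_one) auto
    also have "(n' + 1) + (n'' + 1) + 1 + (n + 1) = n' + n'' + n + 4"
      by simp
    finally show ?thesis .
  qed
  have "(\<Sum>j<n. a j * ((\<Sum>k<n'. G j k * h k) * (\<Sum>l<n''. B j l * x l))) = (\<Sum>j<n. \<Sum>k<n'. \<Sum>l<n''. P j k l)"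
    "(\<Sum>j<n. \<bar>a j\<bar> * ((\<Sum>k<n'. \<bar>G j k\<bar> * \<bar>h k\<bar>) * (\<Sum>l<n''. \<bar>B j l\<bar> * \<bar>x l\<bar>)))
      = (\<Sum>j<n. \<Sum>k<n'. \<Sum>l<n''. \<bar>P j k l\<bar>)"
    unfolding sum_product P_def by (simp_all add: sum_distrib_left abs_mult mult_ac)
  with sum3_perturbation_abs_le[OF \<Psi>_bound] show ?thesis
    unfolding r_expand by simp
qed

lemma L2_set_abs_matvec_le:
  fixes G :: "nat \<Rightarrow> nat \<Rightarrow> real" and h :: "nat \<Rightarrow> real"
  shows "L2_set (\<lambda>j. \<Sum>k<m. \<bar>G j k\<bar> * \<bar>h k\<bar>) {..<r} \<le> frob r m G * vnorm2 m h"
proof -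
  have row: "(\<Sum>k<m. \<bar>G j k\<bar> * \<bar>h k\<bar>)\<^sup>2 \<le> (\<Sum>k<m. (G j k)\<^sup>2) * (\<Sum>k<m. (h k)\<^sup>2)" for j
  proof -
    have "(\<Sum>k<m. \<bar>G j k\<bar> * \<bar>h k\<bar>)\<^sup>2 \<le> (L2_set (G j) {..<m} * L2_set h {..<m})\<^sup>2"
      by (intro power_mono L2_set_mult_ineq) (auto intro: sum_nonneg)
    also have "\<dots> = (\<Sum>k<m. (G j k)\<^sup>2) * (\<Sum>k<m. (h k)\<^sup>2)"
      unfolding L2_set_def power_mult_distrib by (simp add: sum_nonneg)
    finally show ?thesis .
  qed
  have "(\<Sum>j<r. (\<Sum>k<m. \<bar>G j k\<bar> * \<bar>h k\<bar>)\<^sup>2) \<le> (\<Sum>j<r. (\<Sum>k<m. (G j k)\<^sup>2) * (\<Sum>k<m. (h k)\<^sup>2))"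
    by (intro sum_mono row)
  also have "\<dots> = (\<Sum>j<r. \<Sum>k<m. (G j k)\<^sup>2) * (\<Sum>k<m. (h k)\<^sup>2)"
    by (simp add: sum_distrib_right)
  finally show ?thesis
    unfolding L2_set_def frob_def vnorm2_def real_sqrt_mult [symmetric] by (rule real_sqrt_le_mono)
qed

text \<open>The hypothesis \<open>0 < n\<close> is needed because \<open>mat_norm1\<close> is a \<open>Max\<close> over the columns.\<close>
lemma sum_bilinear_abs_le_norms:
  fixes A G B :: "nat \<Rightarrow> nat \<Rightarrow> real" and h x :: "nat \<Rightarrow> real"
  assumes "0 < n"
  shows "(\<Sum>i<r. \<Sum>j<n. \<bar>A i j\<bar> * ((\<Sum>k<n'. \<bar>G j k\<bar> * \<bar>h k\<bar>) * (\<Sum>l<n''. \<bar>B j l\<bar> * \<bar>x l\<bar>)))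
     \<le> mat_norm1 r n A * frob n n' G * vnorm2 n' h * frob n n'' B * vnorm2 n'' x"
proof -
  define U where "U j = (\<Sum>k<n'. \<bar>G j k\<bar> * \<bar>h k\<bar>)" for j
  define V where "V j = (\<Sum>l<n''. \<bar>B j l\<bar> * \<bar>x l\<bar>)" for j
  define M where "M = mat_norm1 r n A"
  have U_nonneg: "0 \<le> U j" and V_nonneg: "0 \<le> V j" for j
    unfolding U_def V_def by (auto intro: sum_nonneg)
  have column_le: "(\<Sum>i<r. \<bar>A i j\<bar>) \<le> M" if "j < n" for j
    unfolding M_def mat_norm1_def using that by (intro Max_ge) auto
  have M_nonneg: "0 \<le> M"
    using column_le[OF assms] by (meson order_trans sum_nonneg abs_ge_zero)
  have "(\<Sum>i<r. \<Sum>j<n. \<bar>A i j\<bar> * (U j * V j)) = (\<Sum>j<n. (\<Sum>i<r. \<bar>A i j\<bar>) * (U j * V j))"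
    by (subst sum.swap) (simp add: sum_distrib_right)
  also have "\<dots> \<le> (\<Sum>j<n. M * (U j * V j))"
    by (intro sum_mono mult_right_mono column_le) (simp_all add: U_nonneg V_nonneg)
  also have "\<dots> = M * (\<Sum>j<n. \<bar>U j\<bar> * \<bar>V j\<bar>)"
    by (simp add: sum_distrib_left U_nonneg V_nonneg)
  also have "\<dots> \<le> M * (L2_set U {..<n} * L2_set V {..<n})"
    by (intro mult_left_mono M_nonneg L2_set_mult_ineq)
  also have "\<dots> \<le> M * ((frob n n' G * vnorm2 n' h) * (frob n n'' B * vnorm2 n'' x))"
    unfolding U_def V_def
    by (intro mult_left_mono M_nonneg mult_mono L2_set_abs_matvec_le L2_set_nonneg)
      (auto simp: frob_def vnorm2_def intro!: mult_nonneg_nonneg sum_nonneg)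
  finally show ?thesis
    unfolding U_def V_def M_def by (simp add: mult_ac)
qed

lemma tc_computed_componentwise_error:
  fixes n_o n_h :: nat
  defines "n \<equiv> n_o + n_h - 1"
  assumes "0 \<le> e" "tc_computed e n_o n_h p h x shat" "i < n_o"
  shows "\<bar>shat i - tc_exact n_o n_h p h x i\<bar> \<le>
    (\<Sum>j<n. \<bar>tcAT p i j\<bar> * ((\<Sum>k<n_h. \<bar>tcG n p j k\<bar> * \<bar>h k\<bar>) * (\<Sum>k<n. \<bar>tcBT n p j k\<bar> * \<bar>x k\<bar>)))
      * err_growth (n_h + 2 * n + 4) e"
proof -
  obtain u v w where
    u: "\<forall>j<n. fl_dot e n_h (tcG n p j) h (u j)" and
    v: "\<forall>j<n. fl_dot e n (tcBT n p j) x (v j)" and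
    w: "\<forall>j<n. \<exists>\<delta>. \<bar>\<delta>\<bar> \<le> e \<and> w j = u j * v j * (1 + \<delta>)" and
    s: "\<forall>i<n_o. fl_dot e n (tcAT p i) w (shat i)"
    using assms(3) unfolding tc_computed_def Let_def n_def [symmetric] by blast
  have exact: "tc_exact n_o n_h p h x i
      = (\<Sum>j<n. tcAT p i j * ((\<Sum>k<n_h. tcG n p j k * h k) * (\<Sum>k<n. tcBT n p j k * x k)))"
    unfolding tc_exact_def Let_def n_def ..
  have "n_h + 2 * n + 4 = n_h + n + n + 4"
    by simp
  then show ?thesis
    unfolding exact by (simp only: fl_bilinear_error[OF assms(2) u v w s[rule_format, OF assms(4)]])
qed

lemma tc_computed_normwise_error:
  fixes n_o n_h :: nat
  defines "n \<equiv> n_o + n_h - 1"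
  assumes "1 \<le> n_o" "1 \<le> n_h" "0 \<le> e" "tc_computed e n_o n_h p h x shat"
  shows "(\<Sum>i<n_o. \<bar>shat i - tc_exact n_o n_h p h x i\<bar>) \<le>
    mat_norm1 n_o n (tcAT p) * frob n n_h (tcG n p) * vnorm2 n_h h * frob n n (tcBT n p) * vnorm2 n x
      * err_growth (n_h + 2 * n + 4) e"
proof -
  define T where "T i = (\<Sum>j<n. \<bar>tcAT p i j\<bar> *
    ((\<Sum>k<n_h. \<bar>tcG n p j k\<bar> * \<bar>h k\<bar>) * (\<Sum>k<n. \<bar>tcBT n p j k\<bar> * \<bar>x k\<bar>)))" for i
  define g where "g = err_growth (n_h + 2 * n + 4) e"
  have "(\<Sum>i<n_o. \<bar>shat i - tc_exact n_o n_h p h x i\<bar>) \<le> (\<Sum>i<n_o. T i * g)"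
    unfolding T_def g_def n_def using assms(4,5) by (intro sum_mono tc_computed_componentwise_error) auto
  also have "\<dots> = (\<Sum>i<n_o. T i) * g"
    by (simp add: sum_distrib_right)
  also have "\<dots> \<le> mat_norm1 n_o n (tcAT p) * frob n n_h (tcG n p) * vnorm2 n_h h * frob n n (tcBT n p) * vnorm2 n x * g"
    unfolding T_def g_def using assms(2-4)
    by (intro mult_right_mono sum_bilinear_abs_le_norms err_growth_nonneg) (simp_all add: n_def)
  finally show ?thesis
    unfolding g_def .
qed

theorem mainTheorem2:
  fixes n_o n_h :: nat and p h x :: "nat \<Rightarrow> real"
  defines "n \<equiv> n_o + n_h - 1"
  assumes "n_o \<ge> 1" and "n_h \<ge> 1"
    and "inj_on p {..<n}"
  shows "\<exists>C \<epsilon>0. \<epsilon>0 > 0 \<and>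
    (\<forall>\<epsilon> shat. 0 \<le> \<epsilon> \<and> \<epsilon> \<le> \<epsilon>0 \<and> tc_computed \<epsilon> n_o n_h p h x shat \<longrightarrow>
       (\<forall>i<n_o. \<bar>shat i - tc_exact n_o n_h p h x i\<bar> \<le>
          (\<Sum>j<n. \<bar>tcAT p i j\<bar> *
             ((\<Sum>k<n_h. \<bar>tcG n p j k\<bar> * \<bar>h k\<bar>) * (\<Sum>k<n. \<bar>tcBT n p j k\<bar> * \<bar>x k\<bar>)))
          * (real n_h + 2 * real n + 4) * \<epsilon> + C * \<epsilon>^2) \<and>
       (\<Sum>i<n_o. \<bar>shat i - tc_exact n_o n_h p h x i\<bar>) \<le>
          mat_norm1 n_o n (tcAT p) * frob n n_h (tcG n p) * vnorm2 n_h h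
            * frob n n (tcBT n p) * vnorm2 n x * (real n_h + 2 * real n + 4) * \<epsilon> + C * \<epsilon>^2)"
proof -
  define N where "N = n_h + 2 * n + 4"
  define T where "T i = (\<Sum>j<n. \<bar>tcAT p i j\<bar> *
    ((\<Sum>k<n_h. \<bar>tcG n p j k\<bar> * \<bar>h k\<bar>) * (\<Sum>k<n. \<bar>tcBT n p j k\<bar> * \<bar>x k\<bar>)))" for i
  define norms where "norms = mat_norm1 n_o n (tcAT p) * frob n n_h (tcG n p) * vnorm2 n_h h
    * frob n n (tcBT n p) * vnorm2 n x"
  define C where "C = 3 ^ N * norms"
  have T_nonneg: "0 \<le> T i" for i
    unfolding T_def by (intro sum_nonneg mult_nonneg_nonneg) auto
  have T_le_norms: "T i \<le> norms" if "i < n_o" for i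
  proof -
    have "T i \<le> (\<Sum>i<n_o. T i)"
      using that T_nonneg by (intro member_le_sum) auto
    also have "\<dots> \<le> norms"
      unfolding T_def norms_def using assms(2,3) by (intro sum_bilinear_abs_le_norms) (simp add: n_def)
    finally show ?thesis .
  qed
  have norms_nonneg: "0 \<le> norms"
    using T_nonneg [of 0] T_le_norms [of 0] assms(2) by simp
  have bounds: "\<forall>\<epsilon> shat. 0 \<le> \<epsilon> \<and> \<epsilon> \<le> 1 \<and> tc_computed \<epsilon> n_o n_h p h x shat \<longrightarrow>
      (\<forall>i<n_o. \<bar>shat i - tc_exact n_o n_h p h x i\<bar> \<le> T i * real N * \<epsilon> + C * \<epsilon>\<^sup>2) \<and>
      (\<Sum>i<n_o. \<bar>shat i - tc_exact n_o n_h p h x i\<bar>) \<le> norms * real N * \<epsilon> + C * \<epsilon>\<^sup>2"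
  proof (intro allI impI)
    fix \<epsilon> shat
    assume "0 \<le> \<epsilon> \<and> \<epsilon> \<le> 1 \<and> tc_computed \<epsilon> n_o n_h p h x shat"
    then have \<epsilon>: "0 \<le> \<epsilon>" "\<epsilon> \<le> 1" and computed: "tc_computed \<epsilon> n_o n_h p h x shat"
      by auto
    have "\<bar>shat i - tc_exact n_o n_h p h x i\<bar> \<le> T i * err_growth N \<epsilon>" if "i < n_o" for i
      unfolding T_def N_def n_def by (rule tc_computed_componentwise_error [OF \<epsilon>(1) computed that])
    moreover have "(\<Sum>i<n_o. \<bar>shat i - tc_exact n_o n_h p h x i\<bar>) \<le> norms * err_growth N \<epsilon>"
      unfolding norms_def N_def n_def by (rule tc_computed_normwise_error [OF assms(2,3) \<epsilon>(1) computed])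
    moreover have "3 ^ N * T i \<le> C" if "i < n_o" for i
      unfolding C_def using T_le_norms [OF that] by simp
    ultimately show "(\<forall>i<n_o. \<bar>shat i - tc_exact n_o n_h p h x i\<bar> \<le> T i * real N * \<epsilon> + C * \<epsilon>\<^sup>2) \<and>
      (\<Sum>i<n_o. \<bar>shat i - tc_exact n_o n_h p h x i\<bar>) \<le> norms * real N * \<epsilon> + C * \<epsilon>\<^sup>2"
      using le_first_order_of_err_growth [OF \<epsilon>] T_nonneg norms_nonneg by (simp add: C_def)
  qed
  moreover have "real N = real n_h + 2 * real n + 4"
    unfolding N_def by simp
  ultimately show ?thesis
    unfolding T_def norms_def using zero_less_one by (simp only:) blast
qed

end
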